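(* Let $D$ and $V$ be one-dimensional Noetherian local integral domains with common quotient field $L$, and set $R=D\cap V$. Suppose: (a) $V$ is a discrete rank one valuation ring of $L$; (b) there is a prime element $\pi$ of $V$ that is also a prime element of $R$; (c) for every maximal ideal $N$ of the integral closure $\overline D$ of $D$, the valuation ring $\overline D_N$ is independent of $V$; (d) $D$ is not a unique factorization domain; (e) there are at least two non-associated irreducible elements of $D$ that are also irreducible in $R$. Then $R$ is a one-dimensional Noetherian integral domain (in particular atomic) with exactly two maximal ideals, $\pi$ is, up to associates in $R$, the unique prime element of $R$, $R$ has irreducible elements not associated to $\pi$, and none of these is absolutely irreducible.
   Context: Two valuation rings $V_1,V_2$ of a field $L$ are independent if the only valuation ring of $L$ containing both $V_1$ and $V_2$ is $L$ itself. Factorization notions for a domain refer to its monoid of non-zero elements. Two factorizations into irreducibles $a_1\cdots a_n=b_1\cdots b_m$ of the same element are essentially the same if $n=m$ and, after re-indexing, $a_j$ and $b_j$ are associated for all $j$. An irreducible $r$ is absolutely irreducible if for every $n\in\mathbb N$, every factorization of $r^n$ into irreducibles is essentially the same as $r^n=r\cdots r$. *)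

theory Defs
  imports "HOL-Computational_Algebra.Polynomial"
begin

text \<open>All rings considered are subrings of a fixed field, the type 'a (playing the role of L).
  Ring-theoretic notions are relativised to a subring S :: 'a set.\<close>

definition subring :: "'a::field set \<Rightarrow> bool" where
  "subring S \<longleftrightarrow> 0 \<in> S \<and> 1 \<in> S \<and> (\<forall>x\<in>S. \<forall>y\<in>S. x + y \<in> S \<and> x - y \<in> S \<and> x * y \<in> S)"

definition quotient_field_is_L :: "'a::field set \<Rightarrow> bool" where
  "quotient_field_is_L S \<longleftrightarrow> (\<forall>x. \<exists>a\<in>S. \<exists>b\<in>S. b \<noteq> 0 \<and> x = a / b)"

definition ideal_in :: "'a::field set \<Rightarrow> 'a set \<Rightarrow> bool" where
  "ideal_in S I \<longleftrightarrow> I \<subseteq> S \<and> 0 \<in> I \<and> (\<forall>x\<in>I. \<forall>y\<in>I. x + y \<in> I \<and> x - y \<in> I)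
     \<and> (\<forall>s\<in>S. \<forall>x\<in>I. s * x \<in> I)"

definition ideal_gen :: "'a::field set \<Rightarrow> 'a set \<Rightarrow> 'a set" where
  "ideal_gen S F = {sum (\<lambda>f. c f * f) F | c. \<forall>f\<in>F. c f \<in> S}"

definition noetherian :: "'a::field set \<Rightarrow> bool" where
  "noetherian S \<longleftrightarrow> (\<forall>I. ideal_in S I \<longrightarrow> (\<exists>F. finite F \<and> F \<subseteq> S \<and> I = ideal_gen S F))"

definition prime_ideal_in :: "'a::field set \<Rightarrow> 'a set \<Rightarrow> bool" where
  "prime_ideal_in S P \<longleftrightarrow> ideal_in S P \<and> P \<noteq> S \<and>
     (\<forall>a\<in>S. \<forall>b\<in>S. a * b \<in> P \<longrightarrow> a \<in> P \<or> b \<in> P)"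

definition maximal_ideal_in :: "'a::field set \<Rightarrow> 'a set \<Rightarrow> bool" where
  "maximal_ideal_in S M \<longleftrightarrow> ideal_in S M \<and> M \<noteq> S \<and>
     (\<forall>J. ideal_in S J \<and> M \<subseteq> J \<longrightarrow> J = M \<or> J = S)"

definition krull_dim_one :: "'a::field set \<Rightarrow> bool" where
  "krull_dim_one S \<longleftrightarrow>
     (\<exists>P Q. prime_ideal_in S P \<and> prime_ideal_in S Q \<and> P \<subset> Q) \<and>
     \<not> (\<exists>P Q T. prime_ideal_in S P \<and> prime_ideal_in S Q \<and> prime_ideal_in S T \<and> P \<subset> Q \<and> Q \<subset> T)"

definition local_ring :: "'a::field set \<Rightarrow> bool" where
  "local_ring S \<longleftrightarrow> (\<exists>!M. maximal_ideal_in S M)"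

definition unit_in :: "'a::field set \<Rightarrow> 'a \<Rightarrow> bool" where
  "unit_in S u \<longleftrightarrow> u \<in> S \<and> (\<exists>v\<in>S. u * v = 1)"

definition dvd_in :: "'a::field set \<Rightarrow> 'a \<Rightarrow> 'a \<Rightarrow> bool" where
  "dvd_in S a b \<longleftrightarrow> (\<exists>c\<in>S. b = a * c)"

definition assoc_in :: "'a::field set \<Rightarrow> 'a \<Rightarrow> 'a \<Rightarrow> bool" where
  "assoc_in S a b \<longleftrightarrow> (\<exists>u. unit_in S u \<and> a = u * b)"

definition irreducible_in :: "'a::field set \<Rightarrow> 'a \<Rightarrow> bool" where
  "irreducible_in S r \<longleftrightarrow> r \<in> S \<and> r \<noteq> 0 \<and> \<not> unit_in S r \<and>
     (\<forall>a\<in>S. \<forall>b\<in>S. r = a * b \<longrightarrow> unit_in S a \<or> unit_in S b)"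

definition prime_elem_in :: "'a::field set \<Rightarrow> 'a \<Rightarrow> bool" where
  "prime_elem_in S p \<longleftrightarrow> p \<in> S \<and> p \<noteq> 0 \<and> \<not> unit_in S p \<and>
     (\<forall>a\<in>S. \<forall>b\<in>S. dvd_in S p (a * b) \<longrightarrow> dvd_in S p a \<or> dvd_in S p b)"

definition factorization_in :: "'a::field set \<Rightarrow> 'a list \<Rightarrow> 'a \<Rightarrow> bool" where
  "factorization_in S xs x \<longleftrightarrow> (\<forall>a\<in>set xs. irreducible_in S a) \<and> prod_list xs = x"

definition essentially_same :: "'a::field set \<Rightarrow> 'a list \<Rightarrow> 'a list \<Rightarrow> bool" where
  "essentially_same S xs ys \<longleftrightarrow> length xs = length ys \<and>
     (\<exists>\<sigma>. bij_betw \<sigma> {..<length xs} {..<length xs} \<and>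
         (\<forall>j<length xs. assoc_in S (xs ! j) (ys ! \<sigma> j)))"

definition atomic :: "'a::field set \<Rightarrow> bool" where
  "atomic S \<longleftrightarrow> (\<forall>x\<in>S. x \<noteq> 0 \<and> \<not> unit_in S x \<longrightarrow> (\<exists>xs. factorization_in S xs x))"

definition UFD :: "'a::field set \<Rightarrow> bool" where
  "UFD S \<longleftrightarrow> atomic S \<and>
     (\<forall>x xs ys. factorization_in S xs x \<and> factorization_in S ys x \<longrightarrow> essentially_same S xs ys)"

definition abs_irreducible_in :: "'a::field set \<Rightarrow> 'a \<Rightarrow> bool" where
  "abs_irreducible_in S r \<longleftrightarrow> irreducible_in S r \<and>
     (\<forall>n::nat. \<forall>xs. factorization_in S xs (r ^ n) \<longrightarrow> essentially_same S xs (replicate n r))"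

definition valuation_ring :: "'a::field set \<Rightarrow> bool" where
  "valuation_ring W \<longleftrightarrow> subring W \<and> (\<forall>x. x \<noteq> 0 \<longrightarrow> x \<in> W \<or> inverse x \<in> W)"

definition discrete_rank_one_valuation_ring :: "'a::field set \<Rightarrow> bool" where
  "discrete_rank_one_valuation_ring V \<longleftrightarrow>
     (\<exists>v :: 'a \<Rightarrow> int.
        (\<forall>x y. x \<noteq> 0 \<and> y \<noteq> 0 \<longrightarrow> v (x * y) = v x + v y) \<and>
        (\<forall>x y. x \<noteq> 0 \<and> y \<noteq> 0 \<and> x + y \<noteq> 0 \<longrightarrow> v (x + y) \<ge> min (v x) (v y)) \<and>
        v ` (UNIV - {0}) = UNIV \<and>
        V = {x. x = 0 \<or> v x \<ge> 0})"

definition independent :: "'a::field set \<Rightarrow> 'a set \<Rightarrow> bool" where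
  "independent V1 V2 \<longleftrightarrow> (\<forall>W. valuation_ring W \<and> V1 \<subseteq> W \<and> V2 \<subseteq> W \<longrightarrow> W = UNIV)"

definition integral_closure :: "'a::field set \<Rightarrow> 'a set" where
  "integral_closure S = {x. \<exists>p::'a poly. lead_coeff p = 1 \<and> (\<forall>i. coeff p i \<in> S) \<and> poly p x = 0}"

definition localization :: "'a::field set \<Rightarrow> 'a set \<Rightarrow> 'a set" where
  "localization S N = {a / b | a b. a \<in> S \<and> b \<in> S \<and> b \<notin> N}"

end

theory Submission
  imports Defs
begin

text \<open>Write \<open>R = D \<inter> V\<close> and let \<open>m\<close> be the maximal ideal of \<open>D\<close>. The prime \<open>\<pi>\<close> of \<open>R\<close> is a
  unit of \<open>D\<close>. Indeed \<open>D \<subseteq> V\<close> is impossible, as then \<open>m = \<pi>D\<close> and all irreducibles of \<open>D\<close> would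
  be associated; so for \<open>d \<in> D - V\<close> and \<open>\<pi> \<in> m\<close> the element \<open>\<pi>\<^sup>n d \<in> m \<inter> R\<close> would have value \<open>0\<close>,
  and since \<open>D\<close> is local of dimension one some power of \<open>\<pi>\<close> would be a \<open>D\<close>-multiple of it, which
  primality of \<open>\<pi>\<close> in \<open>R\<close> rules out. Fix \<open>s \<in> m\<close> with \<open>v s = 0\<close>. Every element of \<open>D\<close> (of \<open>V\<close>)
  lands in \<open>R\<close> after multiplication by a power of \<open>\<pi>\<close> (of \<open>s\<close>), and all \<open>s\<^sup>k + \<pi>\<^sup>j\<close> with
  \<open>k, j > 0\<close> are units of \<open>R\<close>. Hence the nonzero primes of \<open>R\<close> are exactly \<open>m \<inter> R\<close> and \<open>\<pi>R\<close>,
  both maximal, and \<open>R\<close> inherits Noetherianity from \<open>D\<close> and \<open>V\<close>.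

  An irreducible \<open>r\<close> of \<open>R\<close> not associated to \<open>\<pi>\<close> has value \<open>0\<close> and lies in \<open>m\<close>. Normalising
  an irreducible of \<open>D\<close> not associated to \<open>r\<close> by a power of \<open>\<pi>\<close> gives \<open>z \<in> R\<close> of value \<open>0\<close>
  dividing some \<open>r\<^sup>n\<close> in \<open>D\<close>, and the cofactor then lies in \<open>R\<close>; so \<open>r\<^sup>n\<^sup>+\<^sup>1\<close> has a
  factorization containing the irreducible factors of \<open>z\<close>, which are not all associated to \<open>r\<close>.\<close>

lemma subringD:
  assumes "subring S"
  shows "0 \<in> S" "1 \<in> S" "x \<in> S \<Longrightarrow> y \<in> S \<Longrightarrow> x + y \<in> S"
    "x \<in> S \<Longrightarrow> y \<in> S \<Longrightarrow> x - y \<in> S" "x \<in> S \<Longrightarrow> y \<in> S \<Longrightarrow> x * y \<in> S"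
  using assms unfolding subring_def by auto

lemma subring_power: "subring S \<Longrightarrow> x \<in> S \<Longrightarrow> x ^ n \<in> S"
  by (induction n) (auto intro: subringD)

lemma subring_sum:
  assumes "subring S" "finite A" "\<forall>a\<in>A. g a \<in> S"
  shows "sum g A \<in> S"
  using assms(2,3) by (induction A rule: finite_induct) (auto intro: subringD[OF assms(1)])

lemma unit_in_iff: "unit_in S u \<longleftrightarrow> u \<in> S \<and> u \<noteq> 0 \<and> inverse u \<in> S"
proof
  assume "unit_in S u"
  then obtain w where "u \<in> S" "w \<in> S" "u * w = 1" unfolding unit_in_def by auto
  moreover from this have "w = inverse u" by (metis inverse_unique)
  ultimately show "u \<in> S \<and> u \<noteq> 0 \<and> inverse u \<in> S" by auto
next
  assume "u \<in> S \<and> u \<noteq> 0 \<and> inverse u \<in> S"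
  then show "unit_in S u" unfolding unit_in_def by (metis right_inverse)
qed

lemma unit_in_mult: "subring S \<Longrightarrow> unit_in S a \<Longrightarrow> unit_in S b \<Longrightarrow> unit_in S (a * b)"
  by (auto simp: unit_in_iff subringD(5) inverse_mult_distrib)

lemma unit_in_inverse: "unit_in S a \<Longrightarrow> unit_in S (inverse a)"
  by (auto simp: unit_in_iff)

lemma unit_in_power: "subring S \<Longrightarrow> unit_in S a \<Longrightarrow> unit_in S (a ^ n)"
  by (auto simp: unit_in_iff subring_power power_inverse[symmetric])

lemma unit_in_one: "subring S \<Longrightarrow> unit_in S 1"
  by (auto simp: unit_in_iff subringD)

lemma unit_in_mono: "S \<subseteq> T \<Longrightarrow> unit_in S u \<Longrightarrow> unit_in T u"
  by (auto simp: unit_in_iff)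

lemma assoc_in_common_factor:
  assumes "subring S" "unit_in S c" "unit_in S d" "x = c * p" "y = d * p"
  shows "assoc_in S x y"
proof -
  have "unit_in S (c * inverse d)" using assms(1-3) unit_in_mult unit_in_inverse by blast
  moreover have "x = (c * inverse d) * y" using assms(3-5) by (auto simp: unit_in_iff)
  ultimately show ?thesis unfolding assoc_in_def by blast
qed

lemma dvd_in_trans: "subring S \<Longrightarrow> dvd_in S a b \<Longrightarrow> dvd_in S b c \<Longrightarrow> dvd_in S a c"
  unfolding dvd_in_def by (metis mult.assoc subringD(5))

lemma dvd_in_refl: "subring S \<Longrightarrow> dvd_in S a a"
  unfolding dvd_in_def using subringD(2) by force

lemma prod_list_of_associates:
  assumes "subring S" "\<forall>a\<in>set xs. assoc_in S a r"
  shows "\<exists>u. unit_in S u \<and> prod_list xs = u * r ^ length xs"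
  using assms(2)
proof (induction xs)
  case Nil then show ?case using unit_in_one[OF assms(1)] by auto
next
  case (Cons a xs)
  then obtain u where u: "unit_in S u" "prod_list xs = u * r ^ length xs" by auto
  obtain w where w: "unit_in S w" "a = w * r" using Cons.prems unfolding assoc_in_def by auto
  have "prod_list (a # xs) = (w * u) * r ^ length (a # xs)" using u w by (simp add: algebra_simps)
  then show ?case using unit_in_mult[OF assms(1) w(1) u(1)] by blast
qed

lemma abs_irreducible_factors_assoc:
  assumes "abs_irreducible_in S r" "factorization_in S xs (r ^ n)"
  shows "\<forall>a\<in>set xs. assoc_in S a r"
proof
  fix a assume "a \<in> set xs"
  then obtain i where i: "i < length xs" "a = xs ! i" by (auto simp: in_set_conv_nth)
  have "essentially_same S xs (replicate n r)"
    using assms unfolding abs_irreducible_in_def by blast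
  then obtain \<sigma> where \<sigma>: "length xs = n" "bij_betw \<sigma> {..<n} {..<n}"
    "\<forall>j<n. assoc_in S (xs ! j) (replicate n r ! \<sigma> j)"
    unfolding essentially_same_def by auto
  have "\<sigma> i < n" using \<sigma>(1,2) i(1) unfolding bij_betw_def by auto
  then show "assoc_in S a r" using \<sigma> i by auto
qed

lemma idealD:
  assumes "ideal_in S I"
  shows "I \<subseteq> S" "0 \<in> I" "x \<in> I \<Longrightarrow> y \<in> I \<Longrightarrow> x + y \<in> I"
    "x \<in> I \<Longrightarrow> y \<in> I \<Longrightarrow> x - y \<in> I" "s \<in> S \<Longrightarrow> x \<in> I \<Longrightarrow> s * x \<in> I"
  using assms unfolding ideal_in_def by auto

lemma ideal_inI:
  assumes "I \<subseteq> S" "0 \<in> I" "\<And>x y. x \<in> I \<Longrightarrow> y \<in> I \<Longrightarrow> x + y \<in> I"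
    "\<And>x y. x \<in> I \<Longrightarrow> y \<in> I \<Longrightarrow> x - y \<in> I" "\<And>s x. s \<in> S \<Longrightarrow> x \<in> I \<Longrightarrow> s * x \<in> I"
  shows "ideal_in S I"
  using assms unfolding ideal_in_def by auto

lemma ideal_mult_right: "ideal_in S I \<Longrightarrow> s \<in> S \<Longrightarrow> x \<in> I \<Longrightarrow> x * s \<in> I"
  using idealD(5) by (metis mult.commute)

lemma ideal_sum:
  assumes "ideal_in S I" "finite A" "\<forall>a\<in>A. g a \<in> I"
  shows "sum g A \<in> I"
  using assms(2,3) by (induction A rule: finite_induct) (auto intro: idealD[OF assms(1)])

lemma ideal_eq_if_one_mem: "ideal_in S I \<Longrightarrow> 1 \<in> I \<Longrightarrow> I = S"
  using idealD(1,5)[of S I] by (metis mult.right_neutral subset_antisym subsetI)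

lemma ideal_eq_if_unit_mem: "ideal_in S I \<Longrightarrow> unit_in S u \<Longrightarrow> u \<in> I \<Longrightarrow> I = S"
  by (metis ideal_eq_if_one_mem ideal_mult_right unit_in_def)

lemma ideal_power: "ideal_in S I \<Longrightarrow> subring S \<Longrightarrow> x \<in> I \<Longrightarrow> n \<ge> 1 \<Longrightarrow> x ^ n \<in> I"
proof -
  assume I: "ideal_in S I" "subring S" "x \<in> I" "n \<ge> 1"
  then obtain k where "n = Suc k" by (cases n) auto
  moreover have "x ^ k \<in> S" using I idealD(1) subring_power by blast
  ultimately show ?thesis using I ideal_mult_right by (simp add: power_Suc)
qed

lemma ideal_mult_inverse_mem:
  assumes "ideal_in S I" "y \<in> I" "y \<noteq> 0" "a * inverse y \<in> S"
  shows "a \<in> I"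
proof -
  have "y * (a * inverse y) = a" using assms(3) by (simp add: field_simps)
  then show ?thesis using ideal_mult_right[OF assms(1) assms(4,2)] by metis
qed

definition principal_ideal :: "'a::field set \<Rightarrow> 'a \<Rightarrow> 'a set" where
  "principal_ideal S x = {x * c | c. c \<in> S}"

lemma principal_ideal_is_ideal:
  assumes "subring S" "x \<in> S"
  shows "ideal_in S (principal_ideal S x)"
proof (rule ideal_inI)
  note sr = subringD[OF assms(1)]
  show "principal_ideal S x \<subseteq> S" unfolding principal_ideal_def using sr assms(2) by auto
  show "0 \<in> principal_ideal S x" unfolding principal_ideal_def using sr by (auto intro!: exI[of _ 0])
next
  note sr = subringD[OF assms(1)]
  fix a b assume "a \<in> principal_ideal S x" "b \<in> principal_ideal S x"
  then obtain c d where "a = x * c" "b = x * d" "c \<in> S" "d \<in> S"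
    unfolding principal_ideal_def by auto
  moreover have "x * c + x * d = x * (c + d)" "x * c - x * d = x * (c - d)"
    by (simp_all add: algebra_simps)
  ultimately show "a + b \<in> principal_ideal S x" "a - b \<in> principal_ideal S x"
    unfolding principal_ideal_def using sr by blast+
next
  note sr = subringD[OF assms(1)]
  fix s a assume "s \<in> S" "a \<in> principal_ideal S x"
  then obtain c where "a = x * c" "c \<in> S" unfolding principal_ideal_def by auto
  moreover have "s * (x * c) = x * (s * c)" by (simp add: algebra_simps)
  ultimately show "s * a \<in> principal_ideal S x" unfolding principal_ideal_def using sr \<open>s \<in> S\<close> by blast
qed

lemma principal_ideal_self: "subring S \<Longrightarrow> x \<in> principal_ideal S x"
  unfolding principal_ideal_def by (auto intro!: exI[of _ 1] subringD)

lemma dvd_in_iff_principal_ideal: "dvd_in S a b \<longleftrightarrow> b \<in> principal_ideal S a"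
  unfolding dvd_in_def principal_ideal_def by auto

lemma prime_ideal_power:
  assumes "prime_ideal_in S P" "subring S" "a \<in> S" "a ^ n \<in> P"
  shows "a \<in> P"
  using assms(4)
proof (induction n)
  case 0
  then show ?case using assms(1) ideal_eq_if_one_mem unfolding prime_ideal_in_def by auto
next
  case (Suc n)
  then show ?case using assms(1,2,3) subring_power unfolding prime_ideal_in_def
    by (metis power_Suc)
qed

lemma prime_ideal_not_unit: "prime_ideal_in S P \<Longrightarrow> unit_in S u \<Longrightarrow> u \<notin> P"
  unfolding prime_ideal_in_def using ideal_eq_if_unit_mem by blast

lemma prime_ideal_principal:
  assumes "subring S" "prime_elem_in S p"
  shows "prime_ideal_in S (principal_ideal S p)"
proof -
  have pS: "p \<in> S" using assms unfolding prime_elem_in_def by auto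
  have "1 \<notin> principal_ideal S p"
  proof
    assume "1 \<in> principal_ideal S p"
    then have "unit_in S p" using pS unfolding principal_ideal_def unit_in_def by auto
    then show False using assms(2) unfolding prime_elem_in_def by auto
  qed
  then have "principal_ideal S p \<noteq> S" using subringD(2)[OF assms(1)] by auto
  moreover have "\<forall>a\<in>S. \<forall>b\<in>S. a * b \<in> principal_ideal S p \<longrightarrow>
      a \<in> principal_ideal S p \<or> b \<in> principal_ideal S p"
    using assms(2) unfolding prime_elem_in_def principal_ideal_def dvd_in_def by auto
  ultimately show ?thesis
    using principal_ideal_is_ideal[OF assms(1) pS] unfolding prime_ideal_in_def by auto
qed

lemma prime_ideal_zero: "subring S \<Longrightarrow> prime_ideal_in S {0}"
  unfolding prime_ideal_in_def ideal_in_def using subringD[of S] by auto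

lemma ideal_adjoin:
  assumes "subring S" "ideal_in S P" "a \<in> S"
  shows "ideal_in S {p + d * a | p d. p \<in> P \<and> d \<in> S}" (is "ideal_in S ?J")
    and "P \<subseteq> {p + d * a | p d. p \<in> P \<and> d \<in> S}" "a \<in> {p + d * a | p d. p \<in> P \<and> d \<in> S}"
proof -
  note sr = subringD[OF assms(1)] and id = idealD[OF assms(2)]
  show "ideal_in S ?J"
  proof (rule ideal_inI)
    show "?J \<subseteq> S" using id(1) sr assms(3) by auto
    show "0 \<in> ?J" using id(2) sr by (auto intro!: exI[of _ 0])
  next
    fix x y assume "x \<in> ?J" "y \<in> ?J"
    then obtain p1 d1 p2 d2 where "x = p1 + d1 * a" "y = p2 + d2 * a" "p1 \<in> P" "p2 \<in> P" "d1 \<in> S" "d2 \<in> S"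
      by auto
    then have e1: "x + y = (p1 + p2) + (d1 + d2) * a" and e2: "x - y = (p1 - p2) + (d1 - d2) * a"
      by (simp_all add: algebra_simps)
    have "p1 + p2 \<in> P" "p1 - p2 \<in> P" "d1 + d2 \<in> S" "d1 - d2 \<in> S"
      using id sr \<open>p1 \<in> P\<close> \<open>p2 \<in> P\<close> \<open>d1 \<in> S\<close> \<open>d2 \<in> S\<close> by auto
    then show "x + y \<in> ?J" "x - y \<in> ?J" using e1 e2 by blast+
  next
    fix s x assume "s \<in> S" "x \<in> ?J"
    then obtain p1 d1 where "x = p1 + d1 * a" "p1 \<in> P" "d1 \<in> S" by auto
    then have "s * x = s * p1 + (s * d1) * a" by (simp add: algebra_simps)
    moreover have "s * p1 \<in> P" "s * d1 \<in> S" using id sr \<open>s \<in> S\<close> \<open>p1 \<in> P\<close> \<open>d1 \<in> S\<close> by auto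
    ultimately show "s * x \<in> ?J" by blast
  qed
  show "P \<subseteq> ?J"
  proof
    fix x assume "x \<in> P"
    moreover have "x = x + 0 * a" by simp
    ultimately show "x \<in> ?J" using sr by blast
  qed
  have "a = 0 + 1 * a" by simp
  then show "a \<in> ?J" using sr id by blast
qed

lemma maximal_ideal_is_prime:
  assumes "subring S" "maximal_ideal_in S M"
  shows "prime_ideal_in S M"
  unfolding prime_ideal_in_def
proof (intro conjI ballI impI)
  show "ideal_in S M" "M \<noteq> S" using assms(2) unfolding maximal_ideal_in_def by auto
  fix a b assume ab: "a \<in> S" "b \<in> S" "a * b \<in> M"
  show "a \<in> M \<or> b \<in> M"
  proof (rule ccontr)
    assume "\<not> (a \<in> M \<or> b \<in> M)"
    let ?J = "{p + d * a | p d. p \<in> M \<and> d \<in> S}"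
    have "?J = S" using ideal_adjoin[OF assms(1) \<open>ideal_in S M\<close> ab(1)] assms(2) \<open>\<not> (a \<in> M \<or> b \<in> M)\<close>
      unfolding maximal_ideal_in_def by blast
    then have "1 \<in> ?J" using subringD(2)[OF assms(1)] by simp
    then obtain p d where "1 = p + d * a" "p \<in> M" "d \<in> S" by blast
    then have "b = b * p + d * (a * b)" by (metis distrib_left mult.commute mult.left_commute mult_1_right)
    also have "\<dots> \<in> M" using \<open>ideal_in S M\<close> ab \<open>p \<in> M\<close> \<open>d \<in> S\<close> idealD ideal_mult_right by metis
    finally show False using \<open>\<not> (a \<in> M \<or> b \<in> M)\<close> by auto
  qed
qed

lemma ideal_gen_superset:
  assumes "subring S" "finite F" "F \<subseteq> S"
  shows "F \<subseteq> ideal_gen S F"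
proof
  fix f assume f: "f \<in> F"
  let ?c = "\<lambda>g. if g = f then 1 else (0::'a)"
  have "(\<Sum>g\<in>F. ?c g * g) = (\<Sum>g\<in>F. if g = f then f else 0)"
    by (rule sum.cong) auto
  also have "\<dots> = f" using f assms(2) by simp
  finally have "f = (\<Sum>g\<in>F. ?c g * g)" by simp
  moreover have "\<forall>g\<in>F. ?c g \<in> S" using subringD[OF assms(1)] by auto
  ultimately show "f \<in> ideal_gen S F"
    unfolding ideal_gen_def mem_Collect_eq by (intro exI[of _ ?c]) auto
qed

lemma ideal_gen_is_ideal:
  assumes "subring S" "finite F" "F \<subseteq> S"
  shows "ideal_in S (ideal_gen S F)"
proof (rule ideal_inI)
  note sr = subringD[OF assms(1)]
  show "ideal_gen S F \<subseteq> S"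
  proof
    fix x assume "x \<in> ideal_gen S F"
    then obtain c where "x = (\<Sum>f\<in>F. c f * f)" "\<forall>f\<in>F. c f \<in> S" unfolding ideal_gen_def by auto
    then show "x \<in> S"
      using assms(2,3) subring_sum[OF assms(1) assms(2), of "\<lambda>f. c f * f"] sr by blast
  qed
  have "(0::'a) = (\<Sum>f\<in>F. 0 * f)" by simp
  then show "0 \<in> ideal_gen S F"
    unfolding ideal_gen_def mem_Collect_eq using sr by (intro exI[of _ "\<lambda>f. 0"]) simp
next
  note sr = subringD[OF assms(1)]
  fix x y assume "x \<in> ideal_gen S F" "y \<in> ideal_gen S F"
  then obtain c d where c: "x = (\<Sum>f\<in>F. c f * f)" "\<forall>f\<in>F. c f \<in> S"
    and d: "y = (\<Sum>f\<in>F. d f * f)" "\<forall>f\<in>F. d f \<in> S" unfolding ideal_gen_def by auto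
  have "x + y = (\<Sum>f\<in>F. (c f + d f) * f)" using c d by (simp add: sum.distrib distrib_right)
  moreover have "\<forall>f\<in>F. c f + d f \<in> S" using c d sr by auto
  ultimately show "x + y \<in> ideal_gen S F"
    unfolding ideal_gen_def mem_Collect_eq by (intro exI[of _ "\<lambda>f. c f + d f"]) simp
  have "x - y = (\<Sum>f\<in>F. (c f - d f) * f)" using c d by (simp add: sum_subtractf left_diff_distrib)
  moreover have "\<forall>f\<in>F. c f - d f \<in> S" using c d sr by auto
  ultimately show "x - y \<in> ideal_gen S F"
    unfolding ideal_gen_def mem_Collect_eq by (intro exI[of _ "\<lambda>f. c f - d f"]) simp
next
  note sr = subringD[OF assms(1)]
  fix s x assume "s \<in> S" "x \<in> ideal_gen S F"
  then obtain c where c: "x = (\<Sum>f\<in>F. c f * f)" "\<forall>f\<in>F. c f \<in> S" unfolding ideal_gen_def by auto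
  have "s * x = (\<Sum>f\<in>F. (s * c f) * f)" using c by (simp add: sum_distrib_left mult.assoc)
  moreover have "\<forall>f\<in>F. s * c f \<in> S" using c sr \<open>s \<in> S\<close> by auto
  ultimately show "s * x \<in> ideal_gen S F"
    unfolding ideal_gen_def mem_Collect_eq by (intro exI[of _ "\<lambda>f. s * c f"]) simp
qed

lemma ideal_gen_least:
  assumes "ideal_in S I" "finite F" "F \<subseteq> I"
  shows "ideal_gen S F \<subseteq> I"
proof
  fix x assume "x \<in> ideal_gen S F"
  then obtain c where c: "x = (\<Sum>f\<in>F. c f * f)" "\<forall>f\<in>F. c f \<in> S" unfolding ideal_gen_def by auto
  show "x \<in> I" unfolding c(1)
    by (rule ideal_sum[OF assms(1,2)]) (use c(2) assms(3) idealD(5)[OF assms(1)] in blast)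
qed

lemma ideal_maximal_avoiding_powers:
  assumes "subring S" "ideal_in S I" "\<forall>n. y ^ n \<notin> I"
  shows "\<exists>P. ideal_in S P \<and> I \<subseteq> P \<and> (\<forall>n. y ^ n \<notin> P) \<and>
            (\<forall>J. ideal_in S J \<and> P \<subseteq> J \<and> (\<forall>n. y ^ n \<notin> J) \<longrightarrow> J = P)"
proof -
  define A where "A = {J. ideal_in S J \<and> I \<subseteq> J \<and> (\<forall>n. y ^ n \<notin> J)}"
  have "\<forall>C\<in>chains A. \<exists>U\<in>A. \<forall>X\<in>C. X \<subseteq> U"
  proof
    fix C assume C: "C \<in> chains A"
    show "\<exists>U\<in>A. \<forall>X\<in>C. X \<subseteq> U"
    proof (cases "C = {}")
      case True
      then show ?thesis using assms unfolding A_def by auto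
    next
      case False
      have CA: "C \<subseteq> A" and ch: "\<forall>X\<in>C. \<forall>Y\<in>C. X \<subseteq> Y \<or> Y \<subseteq> X"
        using C unfolding chains_def chain_subset_def by auto
      have "ideal_in S (\<Union>C)"
      proof (rule ideal_inI)
        show "\<Union>C \<subseteq> S" using CA unfolding A_def ideal_in_def by auto
        obtain X where "X \<in> C" using False by auto
        then show "0 \<in> \<Union>C" using CA unfolding A_def ideal_in_def by auto
      next
        fix x z assume "x \<in> \<Union>C" "z \<in> \<Union>C"
        then obtain X Z where "X \<in> C" "Z \<in> C" "x \<in> X" "z \<in> Z" by auto
        then have "x \<in> X \<and> z \<in> X \<and> X \<in> C \<or> x \<in> Z \<and> z \<in> Z \<and> Z \<in> C" using ch by blast
        then show "x + z \<in> \<Union>C" "x - z \<in> \<Union>C" using CA unfolding A_def ideal_in_def by blast+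
      next
        fix s x assume "s \<in> S" "x \<in> \<Union>C"
        then show "s * x \<in> \<Union>C" using CA unfolding A_def ideal_in_def by blast
      qed
      moreover have "I \<subseteq> \<Union>C" using False CA unfolding A_def by auto
      moreover have "\<forall>n. y ^ n \<notin> \<Union>C" using CA unfolding A_def by auto
      ultimately have "\<Union>C \<in> A" unfolding A_def by auto
      then show ?thesis by auto
    qed
  qed
  from Zorn_Lemma2[OF this] obtain M where "M \<in> A" "\<forall>X\<in>A. M \<subseteq> X \<longrightarrow> X = M" by auto
  then show ?thesis unfolding A_def by (intro exI[of _ M]) blast
qed

lemma prime_if_maximal_avoiding_powers:
  assumes "subring S" "ideal_in S P" "\<forall>n. y ^ n \<notin> P" "y \<in> S"
    and maxl: "\<forall>J. ideal_in S J \<and> P \<subseteq> J \<and> (\<forall>n. y ^ n \<notin> J) \<longrightarrow> J = P"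
  shows "prime_ideal_in S P"
  unfolding prime_ideal_in_def
proof (intro conjI ballI impI)
  show "ideal_in S P" by fact
  show "P \<noteq> S" using assms(3)[rule_format, of 0] subringD(2)[OF assms(1)] by auto
  fix a b assume ab: "a \<in> S" "b \<in> S" "a * b \<in> P"
  show "a \<in> P \<or> b \<in> P"
  proof (rule ccontr)
    assume nab: "\<not> (a \<in> P \<or> b \<in> P)"
    let ?Ja = "{p + d * a | p d. p \<in> P \<and> d \<in> S}"
    let ?Jb = "{p + d * b | p d. p \<in> P \<and> d \<in> S}"
    note ja = ideal_adjoin[OF assms(1,2) ab(1)] and jb = ideal_adjoin[OF assms(1,2) ab(2)]
    have "?Ja \<noteq> P" using ja(3) nab by auto
    then obtain i where "y ^ i \<in> ?Ja" using maxl ja(1,2) by blast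
    then obtain p1 d1 where 1: "y ^ i = p1 + d1 * a" "p1 \<in> P" "d1 \<in> S" by auto
    have "?Jb \<noteq> P" using jb(3) nab by auto
    then obtain k where "y ^ k \<in> ?Jb" using maxl jb(1,2) by blast
    then obtain p2 d2 where 2: "y ^ k = p2 + d2 * b" "p2 \<in> P" "d2 \<in> S" by auto
    have "y ^ (i + k) = p1 * p2 + p1 * (d2 * b) + p2 * (d1 * a) + (d1 * d2) * (a * b)"
      unfolding power_add 1(1) 2(1) by (simp add: algebra_simps)
    also have "\<dots> \<in> P"
    proof -
      note id = idealD[OF assms(2)] and mr = ideal_mult_right[OF assms(2)]
      have "p1 * p2 \<in> P" using 1 2 id(1) mr by auto
      moreover have "p1 * (d2 * b) \<in> P" "p2 * (d1 * a) \<in> P"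
        using 1 2 ab mr subringD(5)[OF assms(1)] by auto
      moreover have "(d1 * d2) * (a * b) \<in> P" using 1 2 ab id(5) subringD(5)[OF assms(1)] by auto
      ultimately show ?thesis using id(3) by auto
    qed
    finally show False using assms(3) by auto
  qed
qed

section \<open>One-dimensional local domains\<close>

locale local_dim_one =
  fixes D :: "'a::field set"
  assumes subring_D: "subring D" and local_D: "local_ring D" and dim_one_D: "krull_dim_one D"
begin

definition m :: "'a set" where "m = (THE M. maximal_ideal_in D M)"

lemma maximal_m: "maximal_ideal_in D m"
  unfolding m_def using local_D unfolding local_ring_def by (rule theI')

lemma maximal_ideal_eq_m: "maximal_ideal_in D M \<Longrightarrow> M = m"
  using local_D maximal_m unfolding local_ring_def by blast

lemma ideal_m: "ideal_in D m" using maximal_m unfolding maximal_ideal_in_def by auto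

lemma prime_m: "prime_ideal_in D m" using maximal_ideal_is_prime[OF subring_D maximal_m] .

lemma m_subset: "m \<subseteq> D" using idealD(1)[OF ideal_m] .

lemma one_not_in_m: "1 \<notin> m"
  using ideal_eq_if_one_mem[OF ideal_m] maximal_m unfolding maximal_ideal_in_def by auto

lemma unit_not_in_m: "unit_in D x \<Longrightarrow> x \<notin> m"
  using ideal_eq_if_unit_mem[OF ideal_m] maximal_m unfolding maximal_ideal_in_def by auto

lemma m_mult: "a \<in> D \<Longrightarrow> x \<in> m \<Longrightarrow> a * x \<in> m" "a \<in> D \<Longrightarrow> x \<in> m \<Longrightarrow> x * a \<in> m"
  using idealD(5)[OF ideal_m] ideal_mult_right[OF ideal_m] by auto

lemma nonunit_in_m:
  assumes "x \<in> D" "\<not> unit_in D x"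
  shows "x \<in> m"
proof -
  have "\<forall>n. (1::'a) ^ n \<notin> principal_ideal D x"
    using assms unfolding principal_ideal_def unit_in_def by auto
  from ideal_maximal_avoiding_powers[OF subring_D principal_ideal_is_ideal[OF subring_D assms(1)] this]
  obtain P where P: "ideal_in D P" "principal_ideal D x \<subseteq> P" "\<forall>n. (1::'a) ^ n \<notin> P"
    "\<forall>J. ideal_in D J \<and> P \<subseteq> J \<and> (\<forall>n. (1::'a) ^ n \<notin> J) \<longrightarrow> J = P" by blast
  have "maximal_ideal_in D P"
    unfolding maximal_ideal_in_def
  proof (intro conjI allI impI)
    show "ideal_in D P" by fact
    show "P \<noteq> D" using P(3) subringD(2)[OF subring_D] by auto
    fix J assume J: "ideal_in D J \<and> P \<subseteq> J"
    show "J = P \<or> J = D" using ideal_eq_if_one_mem P(4) J by (cases "1 \<in> J") auto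
  qed
  then show ?thesis using maximal_ideal_eq_m P(2) principal_ideal_self[OF subring_D] by auto
qed

text \<open>A prime avoiding all powers of \<open>y \<in> m\<close> but containing \<open>x \<noteq> 0\<close> would lie strictly
  between \<open>{0}\<close> and \<open>m\<close>.\<close>

lemma m_power_in_principal_ideal:
  assumes "x \<in> D" "x \<noteq> 0" "y \<in> m"
  shows "\<exists>n c. c \<in> D \<and> y ^ n = x * c"
proof (cases "unit_in D x")
  case True
  then show ?thesis by (intro exI[of _ 0] exI[of _ "inverse x"]) (auto simp: unit_in_iff)
next
  case False
  show ?thesis
  proof (rule ccontr)
    assume "\<not> ?thesis"
    then have avoid: "\<forall>n. y ^ n \<notin> principal_ideal D x" unfolding principal_ideal_def by auto
    have yD: "y \<in> D" using assms m_subset by auto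
    from ideal_maximal_avoiding_powers[OF subring_D principal_ideal_is_ideal[OF subring_D assms(1)] avoid]
    obtain P where P: "ideal_in D P" "principal_ideal D x \<subseteq> P" "\<forall>n. y ^ n \<notin> P"
      "\<forall>J. ideal_in D J \<and> P \<subseteq> J \<and> (\<forall>n. y ^ n \<notin> J) \<longrightarrow> J = P" by blast
    have prime_P: "prime_ideal_in D P"
      using prime_if_maximal_avoiding_powers[OF subring_D P(1) P(3) yD P(4)] .
    have "{0} \<subset> P"
      using P(2) principal_ideal_self[OF subring_D] assms(2) idealD(2)[OF P(1)] by auto
    moreover have "P \<subseteq> m"
      using nonunit_in_m prime_ideal_not_unit[OF prime_P] idealD(1)[OF P(1)] by blast
    moreover have "y \<notin> P" using P(3)[rule_format, of 1] by simp
    ultimately show False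
      using assms(3) dim_one_D prime_ideal_zero[OF subring_D] prime_P prime_m
      unfolding krull_dim_one_def by blast
  qed
qed

lemma m_clears_denominators:
  assumes "quotient_field_is_L D" "s \<in> m"
  shows "\<exists>k. s ^ k * z \<in> D"
proof -
  obtain a b where ab: "a \<in> D" "b \<in> D" "b \<noteq> 0" "z = a / b"
    using assms(1) unfolding quotient_field_is_L_def by blast
  obtain n c where "c \<in> D" "s ^ n = b * c" using m_power_in_principal_ideal[OF ab(2,3) assms(2)] by blast
  then have "s ^ n * z = c * a" using ab by (simp add: field_simps)
  then show ?thesis using \<open>c \<in> D\<close> ab(1) subringD(5)[OF subring_D] by metis
qed

lemma m_not_subset_principal_ideal:
  assumes "irreducible_in D x" "irreducible_in D y" "\<not> assoc_in D x y"
    and "p \<in> D" "\<not> unit_in D p"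
  shows "\<not> m \<subseteq> principal_ideal D p"
proof
  assume m_p: "m \<subseteq> principal_ideal D p"
  have "\<exists>c. unit_in D c \<and> z = c * p" if "irreducible_in D z" for z
  proof -
    have "z \<in> m" using that nonunit_in_m unfolding irreducible_in_def by auto
    then obtain c where c: "c \<in> D" "z = p * c" using m_p unfolding principal_ideal_def by auto
    then have "unit_in D c" using that assms(4,5) unfolding irreducible_in_def by auto
    then show ?thesis using c by (auto simp: mult.commute)
  qed
  then show False using assms(1-3) assoc_in_common_factor[OF subring_D] by metis
qed

end

section \<open>Noetherian domains are atomic\<close>

lemma ideal_of_divisor_chain:
  fixes f :: "nat \<Rightarrow> 'a::field"
  assumes sub: "subring S" and fS: "\<And>i. f i \<in> S"
    and mono: "\<And>i j. i \<le> j \<Longrightarrow> dvd_in S (f j) (f i)"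
  shows "ideal_in S {x \<in> S. \<exists>i. dvd_in S (f i) x}" (is "ideal_in S ?U")
proof (rule ideal_inI)
  show "?U \<subseteq> S" by auto
  show "0 \<in> ?U" unfolding dvd_in_def using subringD(1)[OF sub] by force
next
  fix x y assume "x \<in> ?U" "y \<in> ?U"
  then obtain i j where ij: "x \<in> S" "y \<in> S" "dvd_in S (f i) x" "dvd_in S (f j) y" by auto
  then have "dvd_in S (f (i + j)) x" "dvd_in S (f (i + j)) y"
    using mono[of i "i+j"] mono[of j "i+j"] dvd_in_trans[OF sub] by auto
  then obtain c d where "c \<in> S" "d \<in> S" "x = f (i + j) * c" "y = f (i + j) * d"
    unfolding dvd_in_def by auto
  then have "x + y = f (i+j) * (c + d)" "x - y = f (i+j) * (c - d)" "c + d \<in> S" "c - d \<in> S"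
    using subringD[OF sub] by (auto simp: algebra_simps)
  then show "x + y \<in> ?U" "x - y \<in> ?U" unfolding dvd_in_def using ij subringD[OF sub] by blast+
next
  fix s x assume "s \<in> S" "x \<in> ?U"
  then obtain i c where "x \<in> S" "c \<in> S" "x = f i * c" unfolding dvd_in_def by auto
  then have "s * x = f i * (s * c)" "s * c \<in> S" "s * x \<in> S"
    using subringD(5)[OF sub] fS[of i] \<open>s \<in> S\<close> by (auto simp: algebra_simps)
  then show "s * x \<in> ?U" unfolding dvd_in_def by blast
qed

text \<open>A strictly descending divisor chain would generate an ideal whose finitely many generators
  are all multiples of a single member of the chain.\<close>

lemma noetherian_wf_proper_divisor:
  assumes sub: "subring S" and noeth: "noetherian S"
  shows "wf {(a,b). a \<in> S \<and> b \<in> S \<and> a \<noteq> 0 \<and> b \<noteq> 0 \<and> dvd_in S a b \<and> \<not> dvd_in S b a}"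
    (is "wf ?r")
proof (unfold wf_iff_no_infinite_down_chain, rule notI)
  assume "\<exists>f. \<forall>i. (f (Suc i), f i) \<in> ?r"
  then obtain f where f: "\<And>i. (f (Suc i), f i) \<in> ?r" by blast
  then have fS: "\<And>i. f i \<in> S" by blast
  have mono: "dvd_in S (f j) (f i)" if "i \<le> j" for i j
    using that
  proof (induction j rule: dec_induct)
    case base then show ?case using dvd_in_refl[OF sub] .
  next
    case (step j) then show ?case using f[of j] dvd_in_trans[OF sub] by blast
  qed
  define U where "U = {x \<in> S. \<exists>i. dvd_in S (f i) x}"
  have "ideal_in S U" unfolding U_def using ideal_of_divisor_chain[OF sub fS mono] .
  then obtain F where F: "finite F" "F \<subseteq> S" "U = ideal_gen S F"
    using noeth unfolding noetherian_def by blast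
  have "\<forall>g\<in>F. \<exists>i. dvd_in S (f i) g" using ideal_gen_superset[OF sub F(1,2)] F(3) unfolding U_def by auto
  then obtain ig where ig: "\<forall>g\<in>F. dvd_in S (f (ig g)) g" by metis
  define N where "N = (\<Sum>g\<in>F. ig g)"
  have "\<forall>g\<in>F. dvd_in S (f N) g"
  proof
    fix g assume "g \<in> F"
    then have "ig g \<le> N" unfolding N_def using F(1) by (simp add: member_le_sum)
    then show "dvd_in S (f N) g" using mono ig \<open>g \<in> F\<close> dvd_in_trans[OF sub] by blast
  qed
  then have "U \<subseteq> principal_ideal S (f N)"
    using ideal_gen_least[OF principal_ideal_is_ideal[OF sub fS] F(1)] F(3) dvd_in_iff_principal_ideal
    by (metis subsetI)
  moreover have "f (Suc N) \<in> U" unfolding U_def using fS dvd_in_refl[OF sub] by blast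
  ultimately have "dvd_in S (f N) (f (Suc N))" using dvd_in_iff_principal_ideal by fast
  then show False using f[of N] by auto
qed

lemma proper_divisor_if_not_unit_cofactor:
  assumes "subring S" "a \<in> S" "b \<in> S" "a \<noteq> 0" "b \<noteq> 0" "\<not> unit_in S b"
  shows "dvd_in S a (a * b) \<and> \<not> dvd_in S (a * b) a"
proof
  show "dvd_in S a (a * b)" using assms(3) unfolding dvd_in_def by blast
  show "\<not> dvd_in S (a * b) a"
  proof
    assume "dvd_in S (a * b) a"
    then obtain c where "c \<in> S" "a * 1 = a * (b * c)" unfolding dvd_in_def by (auto simp: algebra_simps)
    then show False using assms(3,4,6) unfolding unit_in_def by (metis mult_left_cancel)
  qed
qed

lemma noetherian_imp_atomic:
  assumes sub: "subring S" and noeth: "noetherian S"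
  shows "atomic S"
  unfolding atomic_def
proof (intro ballI impI)
  fix x assume "x \<in> S" "x \<noteq> 0 \<and> \<not> unit_in S x"
  then show "\<exists>xs. factorization_in S xs x"
  proof (induction x rule: wf_induct[OF noetherian_wf_proper_divisor[OF sub noeth]])
    case (1 x)
    show ?case
    proof (cases "irreducible_in S x")
      case True
      then show ?thesis unfolding factorization_in_def by (intro exI[of _ "[x]"]) auto
    next
      case False
      then obtain a b where ab: "a \<in> S" "b \<in> S" "x = a * b" "\<not> unit_in S a" "\<not> unit_in S b"
        using 1(2,3) unfolding irreducible_in_def by blast
      have nz: "a \<noteq> 0" "b \<noteq> 0" using ab 1(3) by auto
      have "dvd_in S a x \<and> \<not> dvd_in S x a" "dvd_in S b x \<and> \<not> dvd_in S x b"
        using proper_divisor_if_not_unit_cofactor[OF sub] ab nz by (metis mult.commute)+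
      then obtain xs ys where "factorization_in S xs a" "factorization_in S ys b"
        using 1(1) 1(2,3) ab nz by blast
      then have "factorization_in S (xs @ ys) x" using ab unfolding factorization_in_def by auto
      then show ?thesis by blast
    qed
  qed
qed

section \<open>Noetherianity of subrings\<close>

lemma ideal_saturation:
  assumes subR: "subring R" and subA: "subring A" and tR: "t \<in> R"
    and adj: "\<forall>a\<in>A. \<exists>j. \<forall>i\<ge>j. t ^ i * a \<in> R" and I: "ideal_in R I"
  shows "ideal_in A {x \<in> A. \<exists>k. t ^ k * x \<in> I}" (is "ideal_in A ?J")
proof (rule ideal_inI)
  note sA = subringD[OF subA] and iI = idealD[OF I]
  have tpow: "t ^ n \<in> R" for n using subring_power[OF subR tR] .
  show "?J \<subseteq> A" by auto
  show "0 \<in> ?J" using sA iI by auto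
  fix x y assume "x \<in> ?J" "y \<in> ?J"
  then obtain k1 k2 where k: "x \<in> A" "y \<in> A" "t ^ k1 * x \<in> I" "t ^ k2 * y \<in> I" by auto
  have e: "t ^ (k1 + k2) * (x + y) = t ^ k2 * (t ^ k1 * x) + t ^ k1 * (t ^ k2 * y)"
    "t ^ (k1 + k2) * (x - y) = t ^ k2 * (t ^ k1 * x) - t ^ k1 * (t ^ k2 * y)"
    by (simp_all add: power_add algebra_simps)
  have "t ^ k2 * (t ^ k1 * x) \<in> I" "t ^ k1 * (t ^ k2 * y) \<in> I" using k iI tpow by auto
  then have "t ^ (k1 + k2) * (x + y) \<in> I" "t ^ (k1 + k2) * (x - y) \<in> I" unfolding e using iI by auto
  then show "x + y \<in> ?J" "x - y \<in> ?J" using k sA by blast+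
next
  note sA = subringD[OF subA] and iI = idealD[OF I]
  fix a x assume "a \<in> A" "x \<in> ?J"
  then obtain k where k: "x \<in> A" "t ^ k * x \<in> I" by auto
  obtain j where "t ^ j * a \<in> R" using adj \<open>a \<in> A\<close> by blast
  have "t ^ (j + k) * (a * x) = (t ^ j * a) * (t ^ k * x)" by (simp add: power_add algebra_simps)
  also have "\<dots> \<in> I" using iI \<open>t ^ j * a \<in> R\<close> k by auto
  finally show "a * x \<in> ?J" using k \<open>a \<in> A\<close> sA by blast
qed

lemma ideal_power_mult_mono:
  assumes "subring R" "ideal_in R I" "t \<in> R" "t ^ k * x \<in> I" "k \<le> i"
  shows "t ^ i * x \<in> I"
proof -
  have "t ^ i * x = t ^ (i - k) * (t ^ k * x)"
    using assms(5) by (metis (no_types, lifting) le_add_diff_inverse2 mult.assoc power_add)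
  also have "\<dots> \<in> I" using idealD(5)[OF assms(2) subring_power[OF assms(1,3)] assms(4)] .
  finally show ?thesis .
qed

text \<open>If the Noetherian overring \<open>A\<close> lies in \<open>R[1/t]\<close>, then every ideal of \<open>R\<close> is finitely
  generated up to multiplication by powers of \<open>t\<close>: generators of the saturation of the ideal in \<open>A\<close>,
  pulled into the ideal by one common power of \<open>t\<close>, will do.\<close>

lemma ideal_finitely_generated_up_to_powers:
  assumes subR: "subring R" and subA: "subring A" and RA: "R \<subseteq> A" and noeth: "noetherian A"
    and tR: "t \<in> R" and adj: "\<forall>a\<in>A. \<exists>j. \<forall>i\<ge>j. t ^ i * a \<in> R" and I: "ideal_in R I"
  shows "\<exists>G. finite G \<and> G \<subseteq> I \<and> (\<forall>x\<in>I. \<exists>N. t ^ N * x \<in> ideal_gen R G)"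
proof -
  note iI = idealD[OF I]
  obtain F where F: "finite F" "F \<subseteq> A" "{x \<in> A. \<exists>k. t ^ k * x \<in> I} = ideal_gen A F"
    using noeth[unfolded noetherian_def, rule_format, OF ideal_saturation[OF subR subA tR adj I]]
    by blast
  have "\<exists>k. \<forall>i\<ge>k. t ^ i * f \<in> I" if "f \<in> F" for f
  proof -
    have "f \<in> {x \<in> A. \<exists>k. t ^ k * x \<in> I}" using that F(3) ideal_gen_superset[OF subA F(1,2)] by auto
    then obtain k where "t ^ k * f \<in> I" by blast
    then show ?thesis using ideal_power_mult_mono[OF subR I tR] by blast
  qed
  then have "\<forall>\<^sub>F i in sequentially. \<forall>f\<in>F. t ^ i * f \<in> I"
    unfolding eventually_sequentially[symmetric] by (intro eventually_ball_finite[OF F(1)] ballI)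
  then obtain K where K: "\<forall>f\<in>F. t ^ K * f \<in> I" unfolding eventually_sequentially by blast
  define G where "G = (\<lambda>f. t ^ K * f) ` F"
  have G: "finite G" "G \<subseteq> I" "G \<subseteq> R" unfolding G_def using F(1) K iI(1) by auto
  note genG = ideal_gen_is_ideal[OF subR G(1,3)]
  have "\<exists>N. t ^ N * x \<in> ideal_gen R G" if "x \<in> I" for x
  proof -
    have "x \<in> {x \<in> A. \<exists>k. t ^ k * x \<in> I}" using that iI(1) RA by (auto intro!: exI[of _ 0])
    then have "x \<in> ideal_gen A F" using F(3) by simp
    then obtain c where c: "x = (\<Sum>f\<in>F. c f * f)" "\<forall>f\<in>F. c f \<in> A" unfolding ideal_gen_def by auto
    have "\<forall>\<^sub>F i in sequentially. \<forall>f\<in>F. t ^ i * c f \<in> R"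
      using adj c(2) unfolding eventually_sequentially[symmetric]
      by (intro eventually_ball_finite[OF F(1)] ballI) auto
    then obtain L where L: "\<forall>f\<in>F. t ^ L * c f \<in> R" unfolding eventually_sequentially by blast
    have "t ^ (L + K) * x = (\<Sum>f\<in>F. (t ^ L * c f) * (t ^ K * f))"
      unfolding c(1) sum_distrib_left by (rule sum.cong) (simp_all add: power_add algebra_simps)
    also have "\<dots> \<in> ideal_gen R G"
    proof (rule ideal_sum[OF genG F(1)], intro ballI)
      fix f assume "f \<in> F"
      then have "t ^ K * f \<in> ideal_gen R G" using ideal_gen_superset[OF subR G(1,3)] unfolding G_def by auto
      then show "(t ^ L * c f) * (t ^ K * f) \<in> ideal_gen R G" using idealD(5)[OF genG] L \<open>f \<in> F\<close> by auto
    qed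
    finally show ?thesis by blast
  qed
  then show ?thesis using G by blast
qed

locale valuation =
  fixes v :: "'a::field \<Rightarrow> int"
  assumes v_mult: "\<And>x y. x \<noteq> 0 \<Longrightarrow> y \<noteq> 0 \<Longrightarrow> v (x * y) = v x + v y"
    and v_add: "\<And>x y. x \<noteq> 0 \<Longrightarrow> y \<noteq> 0 \<Longrightarrow> x + y \<noteq> 0 \<Longrightarrow> v (x + y) \<ge> min (v x) (v y)"
begin

lemma v_one: "v 1 = 0"
  using v_mult[of 1 1] by simp

lemma v_uminus: "x \<noteq> 0 \<Longrightarrow> v (- x) = v x"
  using v_mult[of "-1" x] v_mult[of "-1" "-1"] v_one by simp

lemma v_inverse: "x \<noteq> 0 \<Longrightarrow> v (inverse x) = - v x"
  using v_mult[of x "inverse x"] v_one by simp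

lemma v_power: "x \<noteq> 0 \<Longrightarrow> v (x ^ n) = int n * v x"
  by (induction n) (auto simp: v_one v_mult algebra_simps)

lemma v_divide: "x \<noteq> 0 \<Longrightarrow> y \<noteq> 0 \<Longrightarrow> v (x / y) = v x - v y"
  by (simp add: divide_inverse v_mult v_inverse)

lemma v_add_less:
  assumes "a \<noteq> 0" "b \<noteq> 0" "v a < v b"
  shows "a + b \<noteq> 0" "v (a + b) = v a"
proof -
  show nz: "a + b \<noteq> 0"
  proof
    assume "a + b = 0"
    then have "a = - b" by (simp add: eq_neg_iff_add_eq_0)
    then show False using assms v_uminus by auto
  qed
  have "v (a + b) \<ge> v a" using v_add[OF assms(1,2) nz] assms(3) by simp
  moreover have "v a \<ge> min (v (a + b)) (v (- b))"
    using v_add[OF nz, of "- b"] assms by (simp add: v_uminus)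
  ultimately show "v (a + b) = v a" using assms(3) v_uminus[OF assms(2)] by auto
qed

end

section \<open>Intersecting a local domain with a discrete valuation ring\<close>

locale valuation_intersection = local_dim_one D + valuation v for D :: "'a::field set" and v +
  fixes V R :: "'a set" and \<pi> :: 'a
  assumes V_eq: "V = {x. x = 0 \<or> 0 \<le> v x}"
    and v_attains_one: "\<exists>t. t \<noteq> 0 \<and> v t = 1"
    and subring_V: "subring V"
    and quotient_field_D: "quotient_field_is_L D"
    and noetherian_D: "noetherian D" and noetherian_V: "noetherian V"
    and R_eq: "R = D \<inter> V"
    and prime_pi_V: "prime_elem_in V \<pi>" and prime_pi_R: "prime_elem_in R \<pi>"
    and two_irreducibles: "\<exists>x y. irreducible_in D x \<and> irreducible_in D y \<and> \<not> assoc_in D x y \<and>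
                 irreducible_in R x \<and> irreducible_in R y"
begin

lemma in_V_iff: "x \<in> V \<longleftrightarrow> x = 0 \<or> 0 \<le> v x" using V_eq by auto

lemma subring_R: "subring R"
  using subring_D subring_V unfolding R_eq subring_def by auto

lemma R_subset: "R \<subseteq> D" "R \<subseteq> V" unfolding R_eq by auto

lemma unit_R_imp_unit_D: "unit_in R u \<Longrightarrow> unit_in D u"
  using unit_in_mono R_subset(1) by blast

lemma pi_mem: "\<pi> \<in> R" "\<pi> \<in> D" "\<pi> \<in> V" "\<pi> \<noteq> 0"
  using prime_pi_R unfolding prime_elem_in_def R_eq by auto

text \<open>Apply primality of \<open>\<pi>\<close> in \<open>V\<close> to \<open>\<pi> = t \<cdot> (\<pi>/t)\<close> for some \<open>t\<close> of value \<open>1\<close>.\<close>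

lemma v_pi: "v \<pi> = 1"
proof -
  obtain t where t: "t \<noteq> 0" "v t = 1" using v_attains_one by auto
  have "0 \<le> v \<pi>" using pi_mem in_V_iff by auto
  moreover have "v \<pi> \<noteq> 0"
  proof
    assume "v \<pi> = 0"
    then have "unit_in V \<pi>" using in_V_iff v_inverse pi_mem unfolding unit_in_iff by auto
    then show False using prime_pi_V unfolding prime_elem_in_def by auto
  qed
  ultimately have ge: "v \<pi> \<ge> 1" by auto
  have tV: "t \<in> V" and qV: "\<pi> / t \<in> V" using t ge in_V_iff v_divide pi_mem by auto
  have "dvd_in V \<pi> (t * (\<pi> / t))" using t pi_mem subringD(2)[OF subring_V] unfolding dvd_in_def
    by (intro bexI[of _ 1]) auto
  then have "dvd_in V \<pi> t \<or> dvd_in V \<pi> (\<pi> / t)"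
    using prime_pi_V tV qV unfolding prime_elem_in_def by blast
  then show ?thesis
  proof
    assume "dvd_in V \<pi> t"
    then obtain c where c: "c \<in> V" "t = \<pi> * c" unfolding dvd_in_def by auto
    then have "c \<noteq> 0" using t by auto
    then have "v t = v \<pi> + v c" using c v_mult pi_mem by auto
    then show ?thesis using c \<open>c \<noteq> 0\<close> in_V_iff t ge by auto
  next
    assume "dvd_in V \<pi> (\<pi> / t)"
    then obtain c where c: "c \<in> V" "\<pi> / t = \<pi> * c" unfolding dvd_in_def by auto
    then have "c = inverse t" using pi_mem t by (simp add: field_simps)
    then show ?thesis using c in_V_iff v_inverse t by auto
  qed
qed

lemma v_pi_power: "v (\<pi> ^ n) = int n" using v_power[OF pi_mem(4)] v_pi by simp

lemma pi_power_mem: "\<pi> ^ n \<in> R" "\<pi> ^ n \<in> D" "\<pi> ^ n \<in> V" "\<pi> ^ n \<noteq> 0"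
  using subring_power[OF subring_R pi_mem(1)] pi_mem(4) unfolding R_eq by auto

lemma D_not_subset_V: "\<not> D \<subseteq> V"
proof
  assume "D \<subseteq> V"
  then have prime_D: "prime_elem_in D \<pi>" using prime_pi_R unfolding R_eq by (simp add: Int_absorb2)
  then have pi_m: "\<pi> \<in> m" using nonunit_in_m unfolding prime_elem_in_def by auto
  have "principal_ideal D \<pi> \<subseteq> m" unfolding principal_ideal_def using m_mult(2) pi_m by auto
  moreover have "{0} \<subset> principal_ideal D \<pi>"
    using principal_ideal_self[OF subring_D] pi_mem idealD(2)[OF principal_ideal_is_ideal[OF subring_D]]
    by auto
  ultimately have "m \<subseteq> principal_ideal D \<pi>"
    using dim_one_D prime_ideal_principal[OF subring_D prime_D] prime_ideal_zero[OF subring_D] prime_m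
    unfolding krull_dim_one_def by blast
  then show False
    using two_irreducibles m_not_subset_principal_ideal prime_D unfolding prime_elem_in_def by blast
qed

lemma pi_power_not_multiple:
  assumes "s \<in> m" "s \<in> R" "v s = 0" "c \<in> D"
  shows "\<pi> ^ N \<noteq> s * c"
  using assms(4)
proof (induction N arbitrary: c)
  case 0
  then show ?case using assms(1) m_subset unit_not_in_m unfolding unit_in_def by fastforce
next
  case (Suc N c)
  show ?case
  proof
    assume eq: "\<pi> ^ Suc N = s * c"
    then have nz: "s \<noteq> 0" "c \<noteq> 0" using pi_power_mem(4)[of "Suc N"] by auto
    then have "v (\<pi> ^ Suc N) = v s + v c" unfolding eq by (rule v_mult)
    then have "c \<in> R" using Suc.prems assms(3) v_pi_power[of "Suc N"] in_V_iff unfolding R_eq by auto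
    moreover have "dvd_in R \<pi> (s * c)" unfolding dvd_in_def using eq pi_power_mem(1)[of N]
      by (intro bexI[of _ "\<pi> ^ N"]) auto
    ultimately have "dvd_in R \<pi> s \<or> dvd_in R \<pi> c" using prime_pi_R assms(2) unfolding prime_elem_in_def by blast
    then show False
    proof
      assume "dvd_in R \<pi> s"
      then obtain e where e: "e \<in> R" "s = \<pi> * e" unfolding dvd_in_def by auto
      then have "v s = 1 + v e" using nz v_mult pi_mem v_pi by auto
      moreover have "v e \<ge> 0" using e nz R_subset in_V_iff by auto
      ultimately show False using assms(3) by auto
    next
      assume "dvd_in R \<pi> c"
      then obtain e where e: "e \<in> R" "c = \<pi> * e" unfolding dvd_in_def by auto
      then have "\<pi> ^ N = s * e" using eq pi_mem(4) by (simp add: algebra_simps)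
      then show False using Suc.IH e R_subset by auto
    qed
  qed
qed

lemma unit_D_pi: "unit_in D \<pi>"
proof (rule ccontr)
  assume "\<not> unit_in D \<pi>"
  then have pi_m: "\<pi> \<in> m" using nonunit_in_m pi_mem by auto
  obtain d where d: "d \<in> D" "d \<notin> V" using D_not_subset_V by auto
  then have "d \<noteq> 0" "v d < 0" using in_V_iff by auto
  define s where "s = \<pi> ^ nat (- v d) * d"
  have "v s = 0" unfolding s_def using v_mult[OF pi_power_mem(4) \<open>d \<noteq> 0\<close>] v_pi_power \<open>v d < 0\<close> by auto
  moreover have "s \<in> m" unfolding s_def
    using ideal_power[OF ideal_m subring_D pi_m, of "nat (- v d)"] \<open>v d < 0\<close> m_mult(2) d by auto
  moreover have "s \<noteq> 0" unfolding s_def using pi_power_mem \<open>d \<noteq> 0\<close> by auto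
  ultimately obtain N c where "c \<in> D" "\<pi> ^ N = s * c"
    using m_power_in_principal_ideal[OF _ _ pi_m] m_subset by blast
  moreover have "s \<in> R" using \<open>s \<in> m\<close> \<open>v s = 0\<close> m_subset in_V_iff unfolding R_eq by auto
  ultimately show False using pi_power_not_multiple \<open>s \<in> m\<close> \<open>v s = 0\<close> by blast
qed

lemma pi_not_in_m: "\<pi> \<notin> m"
  using unit_D_pi unit_not_in_m by blast

lemma inverse_pi_mem_D: "inverse \<pi> \<in> D"
  using unit_D_pi unfolding unit_in_iff by auto

lemma unit_D_normalizes:
  assumes "z \<in> D" "z \<noteq> 0"
  shows "\<exists>e. unit_in D e \<and> z * e \<in> R \<and> v (z * e) = 0"
proof -
  obtain e where e: "unit_in D e" "e \<noteq> 0" "v e = - v z"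
  proof (cases "v z \<ge> 0")
    case True
    show ?thesis
      by (rule that[of "inverse \<pi> ^ nat (v z)"])
        (use True pi_mem unit_in_power[OF subring_D unit_in_inverse[OF unit_D_pi]] in
          \<open>auto simp: v_power v_inverse v_pi\<close>)
  next
    case False
    show ?thesis
      by (rule that[of "\<pi> ^ nat (- v z)"])
        (use False pi_mem unit_in_power[OF subring_D unit_D_pi] in \<open>auto simp: v_power v_pi\<close>)
  qed
  then have "v (z * e) = 0" using assms(2) v_mult by auto
  moreover have "z * e \<in> D" using e assms subringD(5)[OF subring_D] unfolding unit_in_iff by auto
  ultimately show ?thesis using e in_V_iff unfolding R_eq by auto
qed

lemma exists_s: "\<exists>s. s \<in> m \<and> s \<in> R \<and> s \<noteq> 0 \<and> v s = 0"
proof -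
  obtain x where "irreducible_in D x" using two_irreducibles by blast
  then have x: "x \<in> m" "x \<noteq> 0" using nonunit_in_m unfolding irreducible_in_def by auto
  then obtain e where e: "unit_in D e" "x * e \<in> R" "v (x * e) = 0"
    using unit_D_normalizes m_subset by blast
  moreover have "x * e \<in> m" "x * e \<noteq> 0" using x e m_mult(2) unfolding unit_in_iff by auto
  ultimately show ?thesis by blast
qed

definition s :: 'a where "s = (SOME s. s \<in> m \<and> s \<in> R \<and> s \<noteq> 0 \<and> v s = 0)"

lemma s_mem: "s \<in> m" "s \<in> R" "s \<in> D" "s \<in> V" "s \<noteq> 0" "v s = 0"
  using someI_ex[OF exists_s] R_subset unfolding s_def[symmetric] by auto

lemma pi_power_mult_in_R:
  assumes "y \<in> D"
  shows "\<exists>j. \<forall>i\<ge>j. \<pi> ^ i * y \<in> R"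
proof (cases "y = 0")
  case True then show ?thesis using subringD(1)[OF subring_R] by auto
next
  case False
  show ?thesis
  proof (intro exI allI impI)
    fix i assume "nat (- v y) \<le> i"
    then have "v (\<pi> ^ i * y) \<ge> 0" using v_mult[OF pi_power_mem(4) False] v_pi_power by auto
    then show "\<pi> ^ i * y \<in> R" using assms pi_power_mem subringD(5)[OF subring_D] in_V_iff
      unfolding R_eq by auto
  qed
qed

lemma s_power_mult_in_R:
  assumes "y \<in> V"
  shows "\<exists>k. \<forall>i\<ge>k. s ^ i * y \<in> R"
proof -
  obtain k where k: "s ^ k * y \<in> D" using m_clears_denominators[OF quotient_field_D s_mem(1)] by blast
  show ?thesis
  proof (intro exI allI impI)
    fix i assume "k \<le> i"
    then have "s ^ i * y = s ^ (i - k) * (s ^ k * y)"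
      by (metis (no_types, lifting) le_add_diff_inverse2 mult.assoc power_add)
    also have "\<dots> \<in> D" by (rule subringD(5)[OF subring_D subring_power[OF subring_D s_mem(3)] k])
    finally have "s ^ i * y \<in> D" .
    moreover have "s ^ i * y \<in> V"
      using assms subring_power[OF subring_V s_mem(4)] subringD(5)[OF subring_V] by auto
    ultimately show "s ^ i * y \<in> R" unfolding R_eq by auto
  qed
qed

text \<open>The summand \<open>s\<^sup>k\<close> has the smaller value and \<open>\<pi>\<^sup>j\<close> is a unit of \<open>D\<close>, so the sum is a unit
  of \<open>V\<close> and lies outside \<open>m\<close>.\<close>

lemma unit_R_s_power_plus_pi_power:
  assumes "0 < k" "0 < j"
  shows "unit_in R (s ^ k + \<pi> ^ j)"
proof -
  have sk: "s ^ k \<noteq> 0" "v (s ^ k) = 0" using s_mem v_power by auto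
  have "v (s ^ k) < v (\<pi> ^ j)" using sk v_pi_power assms by auto
  note v_sum = v_add_less[OF sk(1) pi_power_mem(4) this]
  have skm: "s ^ k \<in> m" using ideal_power[OF ideal_m subring_D s_mem(1)] assms by simp
  have "s ^ k + \<pi> ^ j \<notin> m"
  proof
    assume "s ^ k + \<pi> ^ j \<in> m"
    then have "(s ^ k + \<pi> ^ j) - s ^ k \<in> m" using idealD(4)[OF ideal_m] skm by blast
    then show False using unit_not_in_m unit_in_power[OF subring_D unit_D_pi] by simp
  qed
  moreover have sum_D: "s ^ k + \<pi> ^ j \<in> D" using skm m_subset pi_power_mem subringD(3)[OF subring_D]
    by auto
  ultimately have "inverse (s ^ k + \<pi> ^ j) \<in> D" using nonunit_in_m unfolding unit_in_iff by blast
  moreover have "s ^ k + \<pi> ^ j \<in> V" "inverse (s ^ k + \<pi> ^ j) \<in> V"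
    using v_sum sk v_inverse in_V_iff by auto
  ultimately show ?thesis using sum_D v_sum unfolding unit_in_iff R_eq by auto
qed

lemma ideal_eq_R_if_powers_mem:
  assumes "ideal_in R J" "s ^ k \<in> J" "\<pi> ^ j \<in> J" "0 < k" "0 < j"
  shows "J = R"
  using ideal_eq_if_unit_mem[OF assms(1) unit_R_s_power_plus_pi_power[OF assms(4,5)]]
    idealD(3)[OF assms(1-3)] .

definition M_D :: "'a set" where "M_D = m \<inter> R"
definition M_V :: "'a set" where "M_V = principal_ideal R \<pi>"

lemma M_V_iff: "y \<in> M_V \<longleftrightarrow> y \<in> R \<and> (y = 0 \<or> v y \<ge> 1)"
proof
  assume "y \<in> M_V"
  then obtain c where c: "c \<in> R" "y = \<pi> * c" unfolding M_V_def principal_ideal_def by auto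
  then have yR: "y \<in> R" using subringD(5)[OF subring_R] pi_mem by auto
  show "y \<in> R \<and> (y = 0 \<or> v y \<ge> 1)"
  proof (cases "c = 0")
    case True then show ?thesis using c yR by auto
  next
    case False
    then have "v y = 1 + v c" using c v_mult pi_mem v_pi by auto
    moreover have "v c \<ge> 0" using c False R_subset in_V_iff by auto
    ultimately show ?thesis using yR by auto
  qed
next
  assume y: "y \<in> R \<and> (y = 0 \<or> v y \<ge> 1)"
  have "inverse \<pi> * y \<in> D" using y inverse_pi_mem_D R_subset subringD(5)[OF subring_D] by auto
  moreover have "inverse \<pi> * y \<in> V"
  proof (cases "y = 0")
    case True then show ?thesis using in_V_iff by auto
  next
    case False
    then have "v (inverse \<pi> * y) = v y - 1" using v_mult v_inverse v_pi pi_mem by auto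
    then show ?thesis using y False in_V_iff by auto
  qed
  ultimately have "inverse \<pi> * y \<in> R" unfolding R_eq by blast
  moreover have "y = \<pi> * (inverse \<pi> * y)" using pi_mem by simp
  ultimately show "y \<in> M_V" unfolding M_V_def principal_ideal_def by blast
qed

lemma not_in_M_V: "y \<in> R \<Longrightarrow> y \<notin> M_V \<Longrightarrow> y \<noteq> 0 \<and> v y = 0 \<and> inverse y \<in> V"
  using M_V_iff[of y] R_subset in_V_iff v_inverse by fastforce

lemma not_in_M_D: "y \<in> R \<Longrightarrow> y \<notin> M_D \<Longrightarrow> y \<noteq> 0 \<and> inverse y \<in> D"
  using nonunit_in_m R_subset unfolding M_D_def unit_in_iff by blast

lemma ideal_M_V: "ideal_in R M_V"
  unfolding M_V_def using principal_ideal_is_ideal[OF subring_R pi_mem(1)] .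

lemma prime_M_D: "prime_ideal_in R M_D"
  unfolding prime_ideal_in_def
proof (intro conjI ballI impI)
  show "ideal_in R M_D"
    unfolding M_D_def using idealD[OF ideal_m] subringD[OF subring_R] m_mult R_subset
    by (intro ideal_inI) auto
  show "M_D \<noteq> R" using one_not_in_m subringD(2)[OF subring_R] unfolding M_D_def by auto
  fix a b assume "a \<in> R" "b \<in> R" "a * b \<in> M_D"
  then show "a \<in> M_D \<or> b \<in> M_D" using prime_m R_subset unfolding M_D_def prime_ideal_in_def by blast
qed

lemma prime_M_V: "prime_ideal_in R M_V"
  unfolding M_V_def using prime_ideal_principal[OF subring_R prime_pi_R] .

lemma s_in_M_D: "s \<in> M_D" "s \<notin> M_V"
  using s_mem M_V_iff unfolding M_D_def by auto

lemma pi_in_M_V: "\<pi> \<in> M_V" "\<pi> \<notin> M_D"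
  using principal_ideal_self[OF subring_R] pi_not_in_m unfolding M_D_def M_V_def by auto

lemma pi_power_in_ideal_if_not_M_D:
  assumes "ideal_in R J" "y \<in> J" "y \<notin> M_D"
  shows "\<exists>j>0. \<pi> ^ j \<in> J"
proof -
  have y: "inverse y \<in> D" "y \<noteq> 0" using not_in_M_D assms idealD(1) by blast+
  then obtain j where "\<forall>i\<ge>j. \<pi> ^ i * inverse y \<in> R" using pi_power_mult_in_R by blast
  then have "\<pi> ^ (j + 1) \<in> J" using ideal_mult_inverse_mem[OF assms(1,2) y(2)] le_add1 by blast
  then show ?thesis by (intro exI[of _ "j + 1"]) simp
qed

lemma s_power_in_ideal_if_not_M_V:
  assumes "ideal_in R J" "y \<in> J" "y \<notin> M_V"
  shows "\<exists>k>0. s ^ k \<in> J"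
proof -
  have y: "inverse y \<in> V" "y \<noteq> 0" using not_in_M_V assms idealD(1) by blast+
  then obtain k where "\<forall>i\<ge>k. s ^ i * inverse y \<in> R" using s_power_mult_in_R by blast
  then have "s ^ (k + 1) \<in> J" using ideal_mult_inverse_mem[OF assms(1,2) y(2)] le_add1 by blast
  then show ?thesis by (intro exI[of _ "k + 1"]) simp
qed

text \<open>A power of \<open>y \<in> m\<close> is a \<open>D\<close>-multiple of any \<open>x \<in> P - {0}\<close>, and multiplying by a
  power of \<open>\<pi> \<notin> P\<close> moves the cofactor into \<open>R\<close>.\<close>

lemma M_D_subset_prime_ideal:
  assumes P: "prime_ideal_in R P" "P \<noteq> {0}" "P \<subseteq> M_D"
  shows "M_D \<subseteq> P"
proof
  fix y assume yM: "y \<in> M_D"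
  have PI: "ideal_in R P" using P unfolding prime_ideal_in_def by auto
  have pi_P: "\<pi> \<notin> P" using P(3) pi_in_M_V by auto
  obtain x where x: "x \<in> P" "x \<noteq> 0" using P(2) idealD(2)[OF PI] by blast
  then have "x \<in> m" using P(3) unfolding M_D_def by auto
  have y: "y \<in> m" "y \<in> R" using yM unfolding M_D_def by auto
  obtain n c where c: "c \<in> D" "y ^ n = x * c"
    using m_power_in_principal_ideal \<open>x \<in> m\<close> m_subset x(2) y(1) by blast
  obtain j where j: "\<forall>i\<ge>j. \<pi> ^ i * c \<in> R" using pi_power_mult_in_R[OF c(1)] by blast
  have "\<pi> ^ j * y ^ n = x * (\<pi> ^ j * c)" using c by (simp add: algebra_simps)
  also have "\<dots> \<in> P" by (rule ideal_mult_right[OF PI j[rule_format, OF order_refl] x(1)])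
  finally have "\<pi> ^ j \<in> P \<or> y ^ n \<in> P"
    using P(1) pi_power_mem subring_power[OF subring_R y(2)] unfolding prime_ideal_in_def by blast
  then show "y \<in> P" using prime_ideal_power[OF P(1) subring_R] pi_mem y pi_P by blast
qed

lemma prime_ideal_R_cases:
  assumes P: "prime_ideal_in R P" "P \<noteq> {0}"
  shows "P = M_D \<or> P = M_V"
proof -
  have PI: "ideal_in R P" using P unfolding prime_ideal_in_def by auto
  show ?thesis
  proof (cases "\<pi> \<in> P")
    case True
    have "M_V \<subseteq> P" unfolding M_V_def principal_ideal_def using True ideal_mult_right[OF PI] by auto
    moreover have "P \<subseteq> M_V"
    proof
      fix y assume "y \<in> P"
      show "y \<in> M_V"
      proof (rule ccontr)
        assume "y \<notin> M_V"
        then obtain k where "0 < k" "s ^ k \<in> P" using s_power_in_ideal_if_not_M_V PI \<open>y \<in> P\<close> by blast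
        then have "P = R" using ideal_eq_R_if_powers_mem[OF PI, of k 1] True by simp
        then show False using P unfolding prime_ideal_in_def by auto
      qed
    qed
    ultimately show ?thesis by auto
  next
    case False
    have "P \<subseteq> M_D"
    proof
      fix y assume "y \<in> P"
      show "y \<in> M_D"
      proof (rule ccontr)
        assume "y \<notin> M_D"
        then obtain j where "\<pi> ^ j \<in> P" using pi_power_in_ideal_if_not_M_D PI \<open>y \<in> P\<close> by blast
        then show False using prime_ideal_power[OF P(1) subring_R pi_mem(1)] False by blast
      qed
    qed
    then show ?thesis using M_D_subset_prime_ideal[OF P] by auto
  qed
qed

lemma maximal_M_D: "maximal_ideal_in R M_D"
  unfolding maximal_ideal_in_def
proof (intro conjI allI impI)
  show "ideal_in R M_D" "M_D \<noteq> R" using prime_M_D unfolding prime_ideal_in_def by auto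
  fix J assume J: "ideal_in R J \<and> M_D \<subseteq> J"
  show "J = M_D \<or> J = R"
  proof (cases "J \<subseteq> M_D")
    case False
    then obtain j where "0 < j" "\<pi> ^ j \<in> J" using pi_power_in_ideal_if_not_M_D J by blast
    moreover have "s ^ 1 \<in> J" using s_in_M_D J by auto
    ultimately show ?thesis using ideal_eq_R_if_powers_mem[of J 1 j] J by simp
  qed (use J in auto)
qed

lemma maximal_M_V: "maximal_ideal_in R M_V"
  unfolding maximal_ideal_in_def
proof (intro conjI allI impI)
  show "ideal_in R M_V" "M_V \<noteq> R" using prime_M_V unfolding prime_ideal_in_def by auto
  fix J assume J: "ideal_in R J \<and> M_V \<subseteq> J"
  show "J = M_V \<or> J = R"
  proof (cases "J \<subseteq> M_V")
    case False
    then obtain k where "0 < k" "s ^ k \<in> J" using s_power_in_ideal_if_not_M_V J by blast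
    moreover have "\<pi> ^ 1 \<in> J" using pi_in_M_V J by auto
    ultimately show ?thesis using ideal_eq_R_if_powers_mem[of J k 1] J by simp
  qed (use J in auto)
qed

lemma maximal_ideals_R: "{M. maximal_ideal_in R M} = {M_D, M_V}"
proof (intro equalityI subsetI)
  fix M assume "M \<in> {M. maximal_ideal_in R M}"
  then have M: "maximal_ideal_in R M" by auto
  have "M \<noteq> {0}"
  proof
    assume "M = {0}"
    then have "M_V = M \<or> M_V = R"
      using M ideal_M_V idealD(2)[OF ideal_M_V] unfolding maximal_ideal_in_def by auto
    then show False using pi_in_M_V pi_mem \<open>M = {0}\<close> maximal_M_V unfolding maximal_ideal_in_def by auto
  qed
  then show "M \<in> {M_D, M_V}" using prime_ideal_R_cases maximal_ideal_is_prime[OF subring_R M] by auto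
qed (use maximal_M_D maximal_M_V in auto)

lemma card_maximal_ideals_R: "card {M. maximal_ideal_in R M} = 2"
  using maximal_ideals_R s_in_M_D by (auto simp: card_2_iff)

lemma krull_dim_one_R: "krull_dim_one R"
  unfolding krull_dim_one_def
proof (intro conjI notI)
  show "\<exists>P Q. prime_ideal_in R P \<and> prime_ideal_in R Q \<and> P \<subset> Q"
    using prime_ideal_zero[OF subring_R] prime_M_V pi_in_M_V pi_mem idealD(2)[OF ideal_M_V] by blast
  assume "\<exists>P Q T. prime_ideal_in R P \<and> prime_ideal_in R Q \<and> prime_ideal_in R T \<and> P \<subset> Q \<and> Q \<subset> T"
  then obtain P Q T where PQT: "prime_ideal_in R P" "prime_ideal_in R Q" "prime_ideal_in R T"
    "P \<subset> Q" "Q \<subset> T"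
    by blast
  have "0 \<in> P" using PQT(1) idealD(2) unfolding prime_ideal_in_def by auto
  then have "Q \<in> {M_D, M_V}" "T \<in> {M_D, M_V}" using prime_ideal_R_cases PQT by auto
  then show False using PQT(5) s_in_M_D pi_in_M_V by auto
qed

text \<open>Up to powers of \<open>\<pi>\<close> and of \<open>s\<close> every ideal of \<open>R\<close> is generated by a finite set, and
  \<open>s\<^sup>M\<^sup>+\<^sup>1 + \<pi>\<^sup>N\<^sup>+\<^sup>1\<close> is a unit.\<close>

lemma noetherian_R: "noetherian R"
  unfolding noetherian_def
proof (intro allI impI)
  fix I assume I: "ideal_in R I"
  obtain G1 where G1: "finite G1" "G1 \<subseteq> I" "\<forall>x\<in>I. \<exists>N. \<pi> ^ N * x \<in> ideal_gen R G1"
    using ideal_finitely_generated_up_to_powers[OF subring_R subring_D R_subset(1) noetherian_D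
        pi_mem(1) _ I] pi_power_mult_in_R by blast
  obtain G2 where G2: "finite G2" "G2 \<subseteq> I" "\<forall>x\<in>I. \<exists>N. s ^ N * x \<in> ideal_gen R G2"
    using ideal_finitely_generated_up_to_powers[OF subring_R subring_V R_subset(2) noetherian_V
        s_mem(2) _ I] s_power_mult_in_R by blast
  define F where "F = G1 \<union> G2"
  have F: "finite F" "F \<subseteq> I" "F \<subseteq> R" using G1 G2 idealD(1)[OF I] unfolding F_def by auto
  note gen = ideal_gen_is_ideal[OF subring_R F(1,3)]
  have FgF: "F \<subseteq> ideal_gen R F" using ideal_gen_superset[OF subring_R F(1,3)] .
  have "ideal_gen R G1 \<subseteq> ideal_gen R F" "ideal_gen R G2 \<subseteq> ideal_gen R F"
    using ideal_gen_least[OF gen G1(1)] ideal_gen_least[OF gen G2(1)] FgF unfolding F_def by auto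
  have "I \<subseteq> ideal_gen R F"
  proof
    fix x assume "x \<in> I"
    then obtain N M where NM: "\<pi> ^ N * x \<in> ideal_gen R F" "s ^ M * x \<in> ideal_gen R F"
      using G1(3) G2(3) \<open>ideal_gen R G1 \<subseteq> ideal_gen R F\<close> \<open>ideal_gen R G2 \<subseteq> ideal_gen R F\<close> by blast
    let ?u = "s ^ (M + 1) + \<pi> ^ (N + 1)"
    have "?u * x = s * (s ^ M * x) + \<pi> * (\<pi> ^ N * x)" by (simp add: algebra_simps)
    also have "\<dots> \<in> ideal_gen R F"
      by (rule idealD(3)[OF gen idealD(5)[OF gen s_mem(2) NM(2)] idealD(5)[OF gen pi_mem(1) NM(1)]])
    finally have ux: "?u * x \<in> ideal_gen R F" .
    have u: "inverse ?u \<in> R" "?u \<noteq> 0"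
      using unit_R_s_power_plus_pi_power[of "M + 1" "N + 1"] unfolding unit_in_iff by simp_all
    have "x = inverse ?u * (?u * x)" using u(2) by (simp add: mult.assoc[symmetric])
    also have "\<dots> \<in> ideal_gen R F" by (rule idealD(5)[OF gen u(1) ux])
    finally show "x \<in> ideal_gen R F" .
  qed
  then show "\<exists>F. finite F \<and> F \<subseteq> R \<and> I = ideal_gen R F"
    using ideal_gen_least[OF I F(1,2)] F by blast
qed

lemma atomic_R: "atomic R" using noetherian_imp_atomic[OF subring_R noetherian_R] .

text \<open>A prime \<open>p\<close> with \<open>pR = M_D\<close> would give \<open>m \<subseteq> pD\<close>, since \<open>\<pi>\<close> is a unit of \<open>D\<close>.\<close>

lemma prime_elem_R_assoc_pi:
  assumes p: "prime_elem_in R p"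
  shows "assoc_in R p \<pi>"
proof -
  have pR: "p \<in> R" "p \<noteq> 0" using p unfolding prime_elem_in_def by auto
  have "principal_ideal R p \<noteq> {0}" using principal_ideal_self[OF subring_R, of p] pR by auto
  then have "principal_ideal R p = M_D \<or> principal_ideal R p = M_V"
    using prime_ideal_R_cases prime_ideal_principal[OF subring_R p] by auto
  then show ?thesis
  proof
    assume eq: "principal_ideal R p = M_D"
    have "m \<subseteq> principal_ideal D p"
    proof
      fix y assume ym: "y \<in> m"
      then obtain j where "\<pi> ^ j * y \<in> R" using pi_power_mult_in_R m_subset by blast
      then have "\<pi> ^ j * y \<in> M_D" using m_mult(1) pi_power_mem ym unfolding M_D_def by auto
      then obtain c where c: "c \<in> R" "\<pi> ^ j * y = p * c" using eq unfolding principal_ideal_def by auto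
      have "y = p * (c * inverse \<pi> ^ j)" using c(2) pi_power_mem(4)[of j]
        by (simp add: field_simps power_inverse)
      moreover have "c * inverse \<pi> ^ j \<in> D"
        using c(1) R_subset subring_power[OF subring_D inverse_pi_mem_D] subringD(5)[OF subring_D] by auto
      ultimately show "y \<in> principal_ideal D p" unfolding principal_ideal_def by blast
    qed
    moreover have "p \<in> D" "\<not> unit_in D p"
      using eq principal_ideal_self[OF subring_R] unit_not_in_m m_subset unfolding M_D_def by auto
    ultimately show ?thesis using two_irreducibles m_not_subset_principal_ideal by blast
  next
    assume eq: "principal_ideal R p = M_V"
    then obtain c where c: "c \<in> R" "\<pi> = p * c" using pi_in_M_V unfolding principal_ideal_def by auto
    obtain d where d: "d \<in> R" "p = \<pi> * d"
      using eq principal_ideal_self[OF subring_R] unfolding M_V_def principal_ideal_def by blast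
    have "\<pi> * 1 = \<pi> * (d * c)" using c d by (simp add: algebra_simps)
    then have "d * c = 1" using pi_mem(4) by (metis mult_left_cancel)
    then have "unit_in R d" using d c unfolding unit_in_def by auto
    then show ?thesis using d unfolding assoc_in_def by (auto simp: mult.commute)
  qed
qed

lemma exists_irreducible_not_assoc_pi: "\<exists>r. irreducible_in R r \<and> \<not> assoc_in R r \<pi>"
proof (rule ccontr)
  assume none: "\<not> ?thesis"
  obtain x y where xy: "irreducible_in D x" "irreducible_in D y" "\<not> assoc_in D x y"
    "irreducible_in R x" "irreducible_in R y" using two_irreducibles by blast
  then obtain u w where "unit_in R u" "x = u * \<pi>" "unit_in R w" "y = w * \<pi>"
    using none unfolding assoc_in_def by blast
  then have "assoc_in D x y" using assoc_in_common_factor[OF subring_D] unit_R_imp_unit_D by blast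
  then show False using xy(3) by blast
qed

lemma irreducible_not_assoc_pi_mem:
  assumes r: "irreducible_in R r" "\<not> assoc_in R r \<pi>"
  shows "r \<in> m" "v r = 0"
proof -
  have rR: "r \<in> R" "r \<noteq> 0" "\<not> unit_in R r" using r unfolding irreducible_in_def by auto
  have "r \<notin> M_V"
  proof
    assume "r \<in> M_V"
    then obtain c where c: "c \<in> R" "r = \<pi> * c" unfolding M_V_def principal_ideal_def by auto
    then have "unit_in R \<pi> \<or> unit_in R c" using r pi_mem unfolding irreducible_in_def by auto
    then have "unit_in R c" using prime_pi_R unfolding prime_elem_in_def by auto
    then show False using r(2) c unfolding assoc_in_def by (auto simp: mult.commute)
  qed
  then have vr: "v r = 0" "inverse r \<in> V" using not_in_M_V rR by auto
  then show "v r = 0" by simp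
  show "r \<in> m"
  proof (rule ccontr)
    assume "r \<notin> m"
    then have "inverse r \<in> D" using not_in_M_D rR unfolding M_D_def by auto
    then have "unit_in R r" using vr rR unfolding unit_in_iff R_eq by auto
    then show False using rR by auto
  qed
qed

lemma assoc_D_if_unit_times_power:
  assumes z: "irreducible_in D z" and "r \<in> m" "unit_in D w" "z = w * r ^ k"
  shows "assoc_in D z r"
proof (cases k)
  case 0
  then show ?thesis using assms unfolding irreducible_in_def by auto
next
  case (Suc k')
  show ?thesis
  proof (cases k')
    case 0
    then show ?thesis using assms Suc unfolding assoc_in_def by auto
  next
    case (Suc k'')
    have "w * r \<in> m" using m_mult(1) assms(2,3) unfolding unit_in_iff by auto
    moreover have "r ^ k' \<in> m" using ideal_power[OF ideal_m subring_D assms(2), of k'] Suc by simp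
    moreover have "z = (w * r) * r ^ k'" using assms(4) \<open>k = Suc k'\<close> by (simp add: algebra_simps)
    ultimately show ?thesis using z m_subset unit_not_in_m unfolding irreducible_in_def by blast
  qed
qed

text \<open>Normalising the two non-associated irreducibles of \<open>D\<close> by units of \<open>D\<close>, not both of them
  become a unit of \<open>R\<close> times a power of \<open>r\<close>.\<close>

lemma exists_normalized_not_unit_times_power:
  assumes "r \<in> m"
  shows "\<exists>z. z \<in> m \<and> z \<in> R \<and> z \<noteq> 0 \<and> v z = 0 \<and> \<not> (\<exists>u k. unit_in R u \<and> z = u * r ^ k)"
proof (rule ccontr)
  assume none: "\<not> ?thesis"
  have assoc: "assoc_in D x r" if x: "irreducible_in D x" for x
  proof -
    have "x \<in> m" "x \<noteq> 0" using x nonunit_in_m unfolding irreducible_in_def by auto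
    moreover obtain e where e: "unit_in D e" "x * e \<in> R" "v (x * e) = 0"
      using unit_D_normalizes x unfolding irreducible_in_def by blast
    ultimately have "x * e \<in> m" "x * e \<noteq> 0" using m_mult(2) unfolding unit_in_iff by auto
    then obtain u k where u: "unit_in R u" "x * e = u * r ^ k" using none e by blast
    have "unit_in D (u * inverse e)"
      using unit_in_mult[OF subring_D unit_R_imp_unit_D[OF u(1)] unit_in_inverse[OF e(1)]] .
    moreover have "x = (u * inverse e) * r ^ k" using u(2) e(1) by (simp add: field_simps unit_in_iff)
    ultimately show ?thesis using assoc_D_if_unit_times_power[OF x assms] by blast
  qed
  obtain x y where "irreducible_in D x" "irreducible_in D y" "\<not> assoc_in D x y"
    using two_irreducibles by blast
  then show False
    using assoc assoc_in_common_factor[OF subring_D] unfolding assoc_in_def by metis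
qed

lemma not_abs_irreducible:
  assumes r: "irreducible_in R r" "\<not> assoc_in R r \<pi>"
  shows "\<not> abs_irreducible_in R r"
proof
  assume abs: "abs_irreducible_in R r"
  have rR: "r \<in> R" "r \<noteq> 0" using r unfolding irreducible_in_def by auto
  note rm = irreducible_not_assoc_pi_mem[OF r]
  obtain z where z: "z \<in> m" "z \<in> R" "z \<noteq> 0" "v z = 0"
    and not_power: "\<not> (\<exists>u k. unit_in R u \<and> z = u * r ^ k)"
    using exists_normalized_not_unit_times_power[OF rm(1)] by blast
  obtain n c where c: "c \<in> D" "r ^ n = z * c"
    using m_power_in_principal_ideal z(1,3) m_subset rm(1) by blast
  then have "c \<noteq> 0" using rR by auto
  then have "v (r ^ n) = v z + v c" unfolding c(2) by (rule v_mult[OF z(3)])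
  then have "v c = 0" using v_power[OF rR(2)] rm(2) z(4) by simp
  then have "c \<in> R" using c in_V_iff unfolding R_eq by auto
  have cr: "c * r \<in> R" "c * r \<noteq> 0" "\<not> unit_in R (c * r)"
    using subringD(5)[OF subring_R \<open>c \<in> R\<close> rR(1)] \<open>c \<noteq> 0\<close> rR m_mult(1)[OF c(1) rm(1)]
      unit_not_in_m unit_R_imp_unit_D by auto
  obtain xs where xs: "factorization_in R xs z"
    using atomic_R z unit_not_in_m unit_R_imp_unit_D unfolding atomic_def by blast
  obtain ys where ys: "factorization_in R ys (c * r)" using atomic_R cr unfolding atomic_def by blast
  have "factorization_in R (xs @ ys) (r ^ Suc n)"
    using xs ys c unfolding factorization_in_def by (auto simp: algebra_simps)
  then have "\<forall>a\<in>set (xs @ ys). assoc_in R a r" by (rule abs_irreducible_factors_assoc[OF abs])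
  then have "\<forall>a\<in>set xs. assoc_in R a r" by simp
  then show False
    using prod_list_of_associates[OF subring_R] not_power xs unfolding factorization_in_def by metis
qed

end

theorem mainTheorem7:
  fixes D V R :: "'a::field set" and \<pi> :: 'a
  assumes D: "subring D" "quotient_field_is_L D" "noetherian D" "local_ring D" "krull_dim_one D"
    and V: "subring V" "quotient_field_is_L V" "noetherian V" "local_ring V" "krull_dim_one V"
    and R: "R = D \<inter> V"
    and a: "discrete_rank_one_valuation_ring V"
    and b: "prime_elem_in V \<pi>" "prime_elem_in R \<pi>"
    and c: "\<forall>N. maximal_ideal_in (integral_closure D) N \<longrightarrow>
              independent (localization (integral_closure D) N) V"
    and d: "\<not> UFD D"
    and e: "\<exists>x y. irreducible_in D x \<and> irreducible_in D y \<and> \<not> assoc_in D x y \<and>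
                 irreducible_in R x \<and> irreducible_in R y"
  shows "subring R \<and> krull_dim_one R \<and> noetherian R \<and> atomic R
         \<and> card {M. maximal_ideal_in R M} = 2
         \<and> (\<forall>p. prime_elem_in R p \<longrightarrow> assoc_in R p \<pi>)
         \<and> (\<exists>r. irreducible_in R r \<and> \<not> assoc_in R r \<pi>)
         \<and> (\<forall>r. irreducible_in R r \<and> \<not> assoc_in R r \<pi> \<longrightarrow> \<not> abs_irreducible_in R r)"
proof -
  obtain v :: "'a \<Rightarrow> int" where v:
    "\<forall>x y. x \<noteq> 0 \<and> y \<noteq> 0 \<longrightarrow> v (x * y) = v x + v y"
    "\<forall>x y. x \<noteq> 0 \<and> y \<noteq> 0 \<and> x + y \<noteq> 0 \<longrightarrow> v (x + y) \<ge> min (v x) (v y)"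
    "v ` (UNIV - {0}) = UNIV" "V = {x. x = 0 \<or> v x \<ge> 0}"
    using a unfolding discrete_rank_one_valuation_ring_def by blast
  have "\<exists>t. t \<noteq> 0 \<and> v t = 1"
    using v(3) by (metis DiffD2 UNIV_I image_iff singletonI)
  then interpret valuation_intersection D v V R \<pi>
    using D V R b e v by unfold_locales auto
  show ?thesis
    using subring_R krull_dim_one_R noetherian_R atomic_R card_maximal_ideals_R
      prime_elem_R_assoc_pi exists_irreducible_not_assoc_pi not_abs_irreducible by blast
qed

end
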